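(* For $0<h\le i\le n$ and any pair $(d,p)\in DP_i$: if $dp(h,i)>(d,p)$, then $dp(h-1,i)\ge(d,p)$.
   Context: Let $x_0\le x_1\le\cdots\le x_{n+1}$ be real numbers, $\{x\}=x-\lfloor x\rfloor$, and let $\pi=(\pi_0,\dots,\pi_{n+1})$ be the permutation of $\{0,\dots,n+1\}$ such that for $0\le i<j\le n+1$, $\pi_i>\pi_j$ iff $(\{x_i\},-x_i,i)<(\{x_j\},-x_j,j)$ lexicographically. For a sequence of indices $s_0<\cdots<s_k$, a drop is a consecutive pair $(s_{h-1},s_h)$ with $\pi_{s_{h-1}}>\pi_{s_h}$. For $0\le h\le i\le n$, $dp(h,i)$ is the pair $(d(h,i),p(h,i))$, where $d(h,i)$ is the minimum number of drops over all sequences of $h+1$ indices $0=s_0<s_1<\cdots<s_h\le i$, and $p(h,i)$ is the minimum of $\pi_{s_h}$ over all such sequences having exactly $d(h,i)$ drops. Let $DP_i=\{dp(h,i)\mid 0\le h\le i\}$. Pairs are compared lexicographically. *)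

theory Defs
  imports Complex_Main "HOL-Library.Product_Lexorder"
begin

definition key :: "(nat \<Rightarrow> real) \<Rightarrow> nat \<Rightarrow> real \<times> real \<times> nat" where
  "key x i = (frac (x i), - x i, i)"

definition is_pi :: "(nat \<Rightarrow> real) \<Rightarrow> nat \<Rightarrow> (nat \<Rightarrow> nat) \<Rightarrow> bool" where
  "is_pi x n \<sigma> \<longleftrightarrow> bij_betw \<sigma> {0..n+1} {0..n+1} \<and>
     (\<forall>i j. i < j \<and> j \<le> n + 1 \<longrightarrow> (\<sigma> i > \<sigma> j \<longleftrightarrow> key x i < key x j))"

definition valid_seq :: "nat \<Rightarrow> nat \<Rightarrow> (nat \<Rightarrow> nat) \<Rightarrow> bool" where
  "valid_seq h i s \<longleftrightarrow> s 0 = 0 \<and> (\<forall>k. 1 \<le> k \<and> k \<le> h \<longrightarrow> s (k - 1) < s k) \<and> s h \<le> i"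

definition drops :: "(nat \<Rightarrow> nat) \<Rightarrow> nat \<Rightarrow> (nat \<Rightarrow> nat) \<Rightarrow> nat" where
  "drops \<sigma> h s = card {k. 1 \<le> k \<and> k \<le> h \<and> \<sigma> (s (k - 1)) > \<sigma> (s k)}"

definition dd :: "(nat \<Rightarrow> nat) \<Rightarrow> nat \<Rightarrow> nat \<Rightarrow> nat" where
  "dd \<sigma> h i = Min {drops \<sigma> h s | s. valid_seq h i s}"

definition pp :: "(nat \<Rightarrow> nat) \<Rightarrow> nat \<Rightarrow> nat \<Rightarrow> nat" where
  "pp \<sigma> h i = Min {\<sigma> (s h) | s. valid_seq h i s \<and> drops \<sigma> h s = dd \<sigma> h i}"

definition dp :: "(nat \<Rightarrow> nat) \<Rightarrow> nat \<Rightarrow> nat \<Rightarrow> nat \<times> nat" where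
  "dp \<sigma> h i = (dd \<sigma> h i, pp \<sigma> h i)"

definition DP :: "(nat \<Rightarrow> nat) \<Rightarrow> nat \<Rightarrow> (nat \<times> nat) set" where
  "DP \<sigma> i = {dp \<sigma> h i | h. h \<le> i}"

end

theory Submission
  imports Defs
begin

text \<open>For fixed \<open>i\<close> the pair \<open>dp \<sigma> h i\<close> is nondecreasing in \<open>h\<close>. Deleting the second-to-last
  index of an admissible sequence keeps its last element and does not increase the number of drops:
  a drop across the new gap, \<open>\<sigma> (s (h - 1)) > \<sigma> (s (h + 1))\<close>, forces a drop at one of the two
  steps it replaces. For \<open>h = 0\<close> the sequence \<open>0, s 1\<close> either has a drop or satisfies
  \<open>\<sigma> 0 \<le> \<sigma> (s 1)\<close>. Writing \<open>(d, p) = dp \<sigma> h' i\<close>, monotonicity turns \<open>dp \<sigma> h i > (d, p)\<close>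
  into \<open>h' \<le> h - 1\<close> and hence \<open>dp \<sigma> (h - 1) i \<ge> (d, p)\<close>.\<close>

lemma drops_le: "drops \<sigma> h s \<le> h"
proof -
  have "drops \<sigma> h s \<le> card {1..h}"
    unfolding drops_def by (rule card_mono) auto
  then show ?thesis by simp
qed

lemma drops_0 [simp]: "drops \<sigma> 0 s = 0"
  by (simp add: drops_def)

lemma drops_Suc:
  "drops \<sigma> (Suc h) s = drops \<sigma> h s + (if \<sigma> (s (Suc h)) < \<sigma> (s h) then 1 else 0)"
proof -
  let ?D = "\<lambda>h. {k. 1 \<le> k \<and> k \<le> h \<and> \<sigma> (s (k - 1)) > \<sigma> (s k)}"
  have fin: "finite (?D h)"
    by (rule finite_subset[of _ "{..h}"]) auto
  have "?D (Suc h) = (if \<sigma> (s (Suc h)) < \<sigma> (s h) then insert (Suc h) (?D h) else ?D h)"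
    by (auto simp: le_Suc_eq)
  moreover have "Suc h \<notin> ?D h"
    by simp
  ultimately show ?thesis
    using fin unfolding drops_def by simp
qed

lemma drops_cong: "(\<And>j. j \<le> h \<Longrightarrow> s j = t j) \<Longrightarrow> drops \<sigma> h s = drops \<sigma> h t"
  by (induction h) (simp_all add: drops_Suc)

lemma finite_drops_values: "finite {drops \<sigma> h s | s. valid_seq h i s}"
  by (rule finite_subset[of _ "{..h}"]) (auto simp: drops_le)

lemma finite_last_values: "finite {\<sigma> (s h) | s. valid_seq h i s \<and> P s}"
  by (rule finite_subset[of _ "\<sigma> ` {..i}"]) (auto simp: valid_seq_def)

lemma dp_le:
  assumes "valid_seq h i s"
  shows "dp \<sigma> h i \<le> (drops \<sigma> h s, \<sigma> (s h))"
proof -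
  have "dd \<sigma> h i \<le> drops \<sigma> h s"
    unfolding dd_def by (rule Min_le[OF finite_drops_values]) (use assms in blast)
  moreover have "pp \<sigma> h i \<le> \<sigma> (s h)" if "drops \<sigma> h s = dd \<sigma> h i"
    unfolding pp_def by (rule Min_le[OF finite_last_values]) (use assms that in blast)
  ultimately show ?thesis
    unfolding dp_def less_eq_prod_def by force
qed

lemma dp_attained:
  assumes "h \<le> i"
  obtains s where "valid_seq h i s" and "dp \<sigma> h i = (drops \<sigma> h s, \<sigma> (s h))"
proof -
  have "valid_seq h i id"
    using assms by (simp add: valid_seq_def)
  then have "dd \<sigma> h i \<in> {drops \<sigma> h s | s. valid_seq h i s}"
    unfolding dd_def by (intro Min_in[OF finite_drops_values]) blast
  then have "{\<sigma> (s h) | s. valid_seq h i s \<and> drops \<sigma> h s = dd \<sigma> h i} \<noteq> {}"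
    by auto
  then have "pp \<sigma> h i \<in> {\<sigma> (s h) | s. valid_seq h i s \<and> drops \<sigma> h s = dd \<sigma> h i}"
    unfolding pp_def by (rule Min_in[OF finite_last_values])
  with that show ?thesis
    unfolding dp_def by force
qed

lemma dp_le_dp_Suc:
  assumes "Suc h \<le> i"
  shows "dp \<sigma> h i \<le> dp \<sigma> (Suc h) i"
proof -
  obtain s where s: "valid_seq (Suc h) i s" and dp_s: "dp \<sigma> (Suc h) i = (drops \<sigma> (Suc h) s, \<sigma> (s (Suc h)))"
    using dp_attained[OF assms] .
  have s_step: "s j < s (Suc j)" if "j \<le> h" for j
    using s that unfolding valid_seq_def by (metis diff_Suc_1 le_add1 plus_1_eq_Suc Suc_le_mono)
  show ?thesis
  proof (cases h)
    case 0
    have "dp \<sigma> 0 i \<le> (0, \<sigma> 0)"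
      using dp_le[of 0 i s \<sigma>] s by (simp add: valid_seq_def)
    also have "\<dots> \<le> dp \<sigma> (Suc h) i"
      using s 0 unfolding dp_s by (simp add: drops_Suc valid_seq_def less_eq_prod_def)
    finally show ?thesis
      using 0 by simp
  next
    case (Suc g)
    define t where "t = s(h := s (Suc h))"
    have t_valid: "valid_seq h i t"
      using s s_step[of g] s_step[of h] Suc
      unfolding valid_seq_def t_def by (auto simp: less_Suc_eq_le)
    have "drops \<sigma> h t = drops \<sigma> g s + (if \<sigma> (s (Suc h)) < \<sigma> (s g) then 1 else 0)"
      using Suc drops_cong[of g t s \<sigma>] by (simp add: drops_Suc t_def)
    also have "\<dots> \<le> drops \<sigma> (Suc h) s"
      using Suc by (simp add: drops_Suc)
    finally have "(drops \<sigma> h t, \<sigma> (t h)) \<le> dp \<sigma> (Suc h) i"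
      unfolding dp_s t_def by (auto simp: less_eq_prod_def)
    with dp_le[OF t_valid] show ?thesis
      by (rule order_trans)
  qed
qed

lemma dp_mono:
  assumes "h \<le> h'" and "h' \<le> i"
  shows "dp \<sigma> h i \<le> dp \<sigma> h' i"
  using assms
proof (induction h' rule: dec_induct)
  case base
  then show ?case by simp
next
  case (step k)
  then show ?case
    using dp_le_dp_Suc[of k i \<sigma>] by simp
qed

theorem lemma9:
  fixes x :: "nat \<Rightarrow> real" and n :: nat and \<sigma> :: "nat \<Rightarrow> nat"
    and h i d p :: nat
  assumes "mono_on {0..n+1} x"
    and "is_pi x n \<sigma>"
    and "0 < h" and "h \<le> i" and "i \<le> n"
    and "(d, p) \<in> DP \<sigma> i"
    and "dp \<sigma> h i > (d, p)"
  shows "dp \<sigma> (h - 1) i \<ge> (d, p)"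
proof -
  obtain h' where "h' \<le> i" and dp_h': "dp \<sigma> h' i = (d, p)"
    using assms(6) unfolding DP_def by auto
  have "h' < h"
  proof (rule ccontr)
    assume "\<not> h' < h"
    then have "dp \<sigma> h i \<le> (d, p)"
      using dp_mono[of h h' i \<sigma>] \<open>h' \<le> i\<close> dp_h' by simp
    with assms(7) show False
      by simp
  qed
  then show ?thesis
    using dp_mono[of h' "h - 1" i \<sigma>] assms(4) dp_h' by simp
qed

end
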